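(* Let $P$ be a nondeterministic probabilistic program with CFG $(V_p,V_r,L,\to)$, linear invariant $I$, and a PLCS $h$ with respect to $I$. If $P$ has the concentration property and the bounded update property, then $\mathrm{supval}(\mathbf{v})\ge h(\ell_{in},\mathbf{v})$ for all initial valuations $\mathbf{v}\in I(\ell_{in})$.
   Context: Program model. A program is given by its control-flow graph (CFG) $(V_p,V_r,L,\to)$: $V_p$ is a finite set of real-valued program variables, $V_r$ a finite set of sampling variables, each $r\in V_r$ having a fixed probability distribution on $\mathbb{R}$; a valuation over a set $V$ is a map $V\to\mathbb{R}$, and $\mathrm{Val}(V)$ is the set of valuations. The finite label set $L$ is partitioned into assignment labels $L_a$, branching labels $L_b$, probabilistic labels $L_p$, nondeterministic labels $L_{nd}$, tick labels $L_t$, and a terminal label $\ell_{out}$; $\ell_{in}$ is the initial label. An assignment label $\ell$ has a unique successor $\ell'$ and a polynomial update function $F_\ell:\mathrm{Val}(V_p)\times\mathrm{Val}(V_r)\to\mathrm{Val}(V_p)$; a branching label has a condition $\phi$ over $V_p$ with successor $\ell_1$ if $\phi$ holds and $\ell_2$ otherwise; a probabilistic label has $p\in[0,1]$ and goes to successor $\ell_1$ with probability $p$ and $\ell_2$ with probability $1-p$; a nondeterministic label has two successors; a tick label has a unique successor $\ell'$ and a polynomial cost function $R_\ell:\mathrm{Val}(V_p)\to\mathbb{R}$. Only assignments change the valuation. A configuration is a pair $(\ell,\mathbf{v})$; a run is an infinite sequence of configurations. A scheduler maps every finite run ending in a configuration with a nondeterministic label to one of that label's successors. Given a scheduler $\sigma$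 and initial valuation $\mathbf{v}$, runs start at $(\ell_{in},\mathbf{v})$ and evolve as follows: at $\ell_{out}$ the run stays forever; at an assignment label a fresh valuation $\mathbf{u}$ of $V_r$ is sampled independently (each $r$ from its distribution) and the next configuration is $(\ell',F_\ell(\mathbf{v},\mathbf{u}))$; branching/probabilistic/nondeterministic/tick labels move to the successor determined by the condition/coin/scheduler/unique successor without changing the valuation. This yields a probability measure $\mathbb{P}^\sigma_{\mathbf{v}}$ on runs with expectation $\mathbb{E}^\sigma_{\mathbf{v}}$. For a run $\{(\ell_n,\mathbf{v}_n)\}_n$, the step cost is $C_m=R_{\ell_m}(\mathbf{v}_m)$ if $\ell_m\in L_t$ and $C_m=0$ otherwise; $C_\infty=\sum_{m=0}^\infty C_m$; and $\mathrm{supval}(\mathbf{v})=\sup_\sigma\mathbb{E}^\sigma_{\mathbf{v}}(C_\infty)$. The termination time is $T=\min\{n\mid \ell_n=\ell_{out}\}$ ($\min\emptyset=\infty$). Invariant. A linear invariant is a map $I$ assigning to each label a finite union of polyhedra $I(\ell)\subseteq\mathrm{Val}(V_p)$ such that for every $\mathbf{v}\in I(\ell_{in})$, every configuration $(\ell,\mathbf{w})$ reachable from $(\ell_{in},\mathbf{v})$ satisfies $\mathbf{w}\in I(\ell)$. Pre-expectation. For $h:L\times\mathrm{Val}(V_p)\to\mathbb{R}$, $\mathrm{pre}_h(\ell,\mathbf{v})$ is: $h(\ell,\mathbf{v})$ if $\ell=\ell_{out}$; $\mathbb{E}_{\mathbf{u}}[h(\ell',F_\ell(\mathbf{v},\mathbf{u}))]$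 if $\ell\in L_a$ (with $\mathbf{u}$ distributed as the sampling variables); $\mathbf{1}_{\mathbf{v}\models\phi}h(\ell_1,\mathbf{v})+\mathbf{1}_{\mathbf{v}\not\models\phi}h(\ell_2,\mathbf{v})$ if $\ell\in L_b$; $p\,h(\ell_1,\mathbf{v})+(1-p)h(\ell_2,\mathbf{v})$ if $\ell\in L_p$; $R_\ell(\mathbf{v})+h(\ell',\mathbf{v})$ if $\ell\in L_t$; the maximum of $h(\ell'',\mathbf{v})$ over the successors $\ell''$ of $\ell$ if $\ell\in L_{nd}$. PLCS. A polynomial lower cost submartingale (PLCS) of degree $d$ w.r.t. $I$ is $h:L\times\mathrm{Val}(V_p)\to\mathbb{R}$ such that (C1) each $h(\ell,\cdot)$ is a polynomial of degree at most $d$ in the program variables; (C2) $h(\ell_{out},\mathbf{v})=0$ for all $\mathbf{v}$; (C3') $\mathrm{pre}_h(\ell,\mathbf{v})\ge h(\ell,\mathbf{v})$ for all $\ell\ne\ell_{out}$ and all $\mathbf{v}\in I(\ell)$. Concentration property. For every initial valuation $\mathbf{v}\in I(\ell_{in})$ there are constants $a,b>0$ such that for all sufficiently large $n$ and all schedulers $\sigma$, $\mathbb{P}^\sigma_{\mathbf{v}}(T>n)\le a\cdot e^{-b\cdot n}$. Bounded update property. There is a constant $M>0$ such that for every assignment label $\ell$, every $\mathbf{v}\in I(\ell)$, every sampled valuation $\mathbf{u}$ of $V_r$ and every $x\in V_p$, $|F_\ell(\mathbf{v},\mathbf{u})(x)-\mathbf{v}(x)|\le M$. *)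

theory Defs
  imports "HOL-Probability.Probability"
begin

datatype ('l,'v,'r) lkind =
    Assign 'l "('v \<Rightarrow> real) \<Rightarrow> ('r \<Rightarrow> real) \<Rightarrow> ('v \<Rightarrow> real)"
  | Branch "('v \<Rightarrow> real) set" 'l 'l
  | Probab real 'l 'l
  | Nondet 'l 'l
  | Tick "('v \<Rightarrow> real) \<Rightarrow> real" 'l
  | Terminal

type_synonym ('l,'v) config = "'l \<times> ('v \<Rightarrow> real)"

definition poly_fun :: "nat \<Rightarrow> (('a::finite \<Rightarrow> real) \<Rightarrow> real) \<Rightarrow> bool" where
  "poly_fun d f \<longleftrightarrow>
     (\<exists>(E :: ('a \<Rightarrow> nat) set) (c :: ('a \<Rightarrow> nat) \<Rightarrow> real).
        finite E \<and> (\<forall>e\<in>E. (\<Sum>x\<in>UNIV. e x) \<le> d) \<and>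
        (\<forall>w. f w = (\<Sum>e\<in>E. c e * (\<Prod>x\<in>UNIV. w x ^ e x))))"

definition is_poly :: "(('a::finite \<Rightarrow> real) \<Rightarrow> real) \<Rightarrow> bool" where
  "is_poly f \<longleftrightarrow> (\<exists>d. poly_fun d f)"

definition poly_update ::
  "(('v::finite \<Rightarrow> real) \<Rightarrow> ('r::finite \<Rightarrow> real) \<Rightarrow> ('v \<Rightarrow> real)) \<Rightarrow> bool" where
  "poly_update F \<longleftrightarrow>
     (\<forall>x. is_poly (\<lambda>w :: ('v + 'r) \<Rightarrow> real. F (\<lambda>y. w (Inl y)) (\<lambda>r. w (Inr r)) x))"

definition valid_cfg ::
  "('l::finite \<Rightarrow> ('l,'v::finite,'r::finite) lkind) \<Rightarrow> 'l \<Rightarrow> ('r \<Rightarrow> real measure) \<Rightarrow> bool" where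
  "valid_cfg K lout \<mu> \<longleftrightarrow>
     K lout = Terminal \<and> (\<forall>l. K l = Terminal \<longrightarrow> l = lout)
   \<and> (\<forall>r. prob_space (\<mu> r) \<and> sets (\<mu> r) = sets (borel :: real measure))
   \<and> (\<forall>l l' F. K l = Assign l' F \<longrightarrow> poly_update F)
   \<and> (\<forall>l \<phi> l1 l2. K l = Branch \<phi> l1 l2 \<longrightarrow>
          \<phi> \<in> sets (PiM (UNIV :: 'v set) (\<lambda>_. borel :: real measure)))
   \<and> (\<forall>l p l1 l2. K l = Probab p l1 l2 \<longrightarrow> 0 \<le> p \<and> p \<le> 1)
   \<and> (\<forall>l R l'. K l = Tick R l' \<longrightarrow> is_poly R)"

definition samp :: "('r::finite \<Rightarrow> real measure) \<Rightarrow> ('r \<Rightarrow> real) measure" where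
  "samp \<mu> = PiM UNIV \<mu>"

text \<open>Randomness used in one step: a fresh sampling valuation and a uniform coin in [0,1]
  (the coin of a probabilistic label with parameter p goes to the first successor iff c < p).\<close>
definition step_space :: "('r::finite \<Rightarrow> real measure) \<Rightarrow> (('r \<Rightarrow> real) \<times> real) measure" where
  "step_space \<mu> = samp \<mu> \<Otimes>\<^sub>M uniform_measure lborel {0..1::real}"

definition omega :: "('r::finite \<Rightarrow> real measure) \<Rightarrow> (nat \<Rightarrow> ('r \<Rightarrow> real) \<times> real) measure" where
  "omega \<mu> = PiM UNIV (\<lambda>_::nat. step_space \<mu>)"

text \<open>A scheduler maps a finite run (history of configurations) to the choice of the first
  (True) or second (False) successor of the nondeterministic label it ends in.\<close>
type_synonym ('l,'v) scheduler = "('l,'v) config list \<Rightarrow> bool"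

definition step ::
  "('l \<Rightarrow> ('l,'v,'r) lkind) \<Rightarrow> ('l,'v) scheduler \<Rightarrow> ('l,'v) config list
     \<Rightarrow> ('r \<Rightarrow> real) \<times> real \<Rightarrow> ('l,'v) config" where
  "step K \<sigma> hs uc =
     (let l = fst (last hs); v = snd (last hs); u = fst uc; c = snd uc in
      case K l of
        Assign l' F \<Rightarrow> (l', F v u)
      | Branch \<phi> l1 l2 \<Rightarrow> (if v \<in> \<phi> then l1 else l2, v)
      | Probab p l1 l2 \<Rightarrow> (if c < p then l1 else l2, v)
      | Nondet l1 l2 \<Rightarrow> (if \<sigma> hs then l1 else l2, v)
      | Tick R l' \<Rightarrow> (l', v)
      | Terminal \<Rightarrow> (l, v))"

primrec hist ::
  "('l \<Rightarrow> ('l,'v,'r) lkind) \<Rightarrow> ('l,'v) scheduler \<Rightarrow> 'l \<Rightarrow> ('v \<Rightarrow> real)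
     \<Rightarrow> (nat \<Rightarrow> ('r \<Rightarrow> real) \<times> real) \<Rightarrow> nat \<Rightarrow> ('l,'v) config list" where
  "hist K \<sigma> lin v \<omega> 0 = [(lin, v)]"
| "hist K \<sigma> lin v \<omega> (Suc n) = hist K \<sigma> lin v \<omega> n @ [step K \<sigma> (hist K \<sigma> lin v \<omega> n) (\<omega> n)]"

definition run ::
  "('l \<Rightarrow> ('l,'v,'r) lkind) \<Rightarrow> ('l,'v) scheduler \<Rightarrow> 'l \<Rightarrow> ('v \<Rightarrow> real)
     \<Rightarrow> (nat \<Rightarrow> ('r \<Rightarrow> real) \<times> real) \<Rightarrow> nat \<Rightarrow> ('l,'v) config" where
  "run K \<sigma> lin v \<omega> n = last (hist K \<sigma> lin v \<omega> n)"

text \<open>Schedulers for which the run is a random variable (measurable choices).\<close>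
definition admissible ::
  "('l \<Rightarrow> ('l,'v,'r::finite) lkind) \<Rightarrow> ('r \<Rightarrow> real measure) \<Rightarrow> 'l \<Rightarrow> ('v \<Rightarrow> real)
     \<Rightarrow> ('l,'v) scheduler \<Rightarrow> bool" where
  "admissible K \<mu> lin v \<sigma> \<longleftrightarrow>
     (\<forall>n. (\<lambda>\<omega>. \<sigma> (hist K \<sigma> lin v \<omega> n)) \<in> measurable (omega \<mu>) (count_space UNIV))"

definition cost :: "('l \<Rightarrow> ('l,'v,'r) lkind) \<Rightarrow> ('l,'v) config \<Rightarrow> real" where
  "cost K c = (case K (fst c) of Tick R l' \<Rightarrow> R (snd c) | _ \<Rightarrow> 0)"

definition total_cost ::
  "('l \<Rightarrow> ('l,'v,'r) lkind) \<Rightarrow> ('l,'v) scheduler \<Rightarrow> 'l \<Rightarrow> ('v \<Rightarrow> real)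
     \<Rightarrow> (nat \<Rightarrow> ('r \<Rightarrow> real) \<times> real) \<Rightarrow> real" where
  "total_cost K \<sigma> lin v \<omega> = (\<Sum>m. cost K (run K \<sigma> lin v \<omega> m))"

definition expected_cost ::
  "('l \<Rightarrow> ('l,'v,'r::finite) lkind) \<Rightarrow> ('r \<Rightarrow> real measure) \<Rightarrow> ('l,'v) scheduler
     \<Rightarrow> 'l \<Rightarrow> ('v \<Rightarrow> real) \<Rightarrow> real" where
  "expected_cost K \<mu> \<sigma> lin v = (\<integral>\<omega>. total_cost K \<sigma> lin v \<omega> \<partial>omega \<mu>)"

definition supval ::
  "('l \<Rightarrow> ('l,'v,'r::finite) lkind) \<Rightarrow> ('r \<Rightarrow> real measure) \<Rightarrow> 'l \<Rightarrow> ('v \<Rightarrow> real) \<Rightarrow> ereal" where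
  "supval K \<mu> lin v =
     (SUP \<sigma>\<in>{\<sigma>. admissible K \<mu> lin v \<sigma>}. ereal (expected_cost K \<mu> \<sigma> lin v))"

definition supp_real :: "real measure \<Rightarrow> real set" where
  "supp_real m = {x. \<forall>e>0. emeasure m {x - e<..<x + e} \<noteq> 0}"

definition sampled :: "('r \<Rightarrow> real measure) \<Rightarrow> ('r \<Rightarrow> real) set" where
  "sampled \<mu> = {u. \<forall>r. u r \<in> supp_real (\<mu> r)}"

inductive tstep :: "('l \<Rightarrow> ('l,'v,'r) lkind) \<Rightarrow> ('r \<Rightarrow> real measure)
    \<Rightarrow> ('l,'v) config \<Rightarrow> ('l,'v) config \<Rightarrow> bool" for K \<mu> where
  t_assign: "K l = Assign l' F \<Longrightarrow> u \<in> sampled \<mu> \<Longrightarrow> tstep K \<mu> (l, v) (l', F v u)"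
| t_branch: "K l = Branch \<phi> l1 l2 \<Longrightarrow> tstep K \<mu> (l, v) (if v \<in> \<phi> then l1 else l2, v)"
| t_prob1: "K l = Probab p l1 l2 \<Longrightarrow> 0 < p \<Longrightarrow> tstep K \<mu> (l, v) (l1, v)"
| t_prob2: "K l = Probab p l1 l2 \<Longrightarrow> p < 1 \<Longrightarrow> tstep K \<mu> (l, v) (l2, v)"
| t_nd1: "K l = Nondet l1 l2 \<Longrightarrow> tstep K \<mu> (l, v) (l1, v)"
| t_nd2: "K l = Nondet l1 l2 \<Longrightarrow> tstep K \<mu> (l, v) (l2, v)"
| t_tick: "K l = Tick R l' \<Longrightarrow> tstep K \<mu> (l, v) (l', v)"
| t_term: "K l = Terminal \<Longrightarrow> tstep K \<mu> (l, v) (l, v)"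

definition polyhedron_val :: "('v::finite \<Rightarrow> real) set \<Rightarrow> bool" where
  "polyhedron_val P \<longleftrightarrow>
     (\<exists>C :: (('v \<Rightarrow> real) \<times> real) set. finite C \<and>
        P = {v. \<forall>(a, b)\<in>C. (\<Sum>x\<in>UNIV. a x * v x) \<le> b})"

definition union_polyhedra :: "('v::finite \<Rightarrow> real) set \<Rightarrow> bool" where
  "union_polyhedra S \<longleftrightarrow>
     (\<exists>\<P>. finite \<P> \<and> (\<forall>P\<in>\<P>. polyhedron_val P) \<and> S = \<Union>\<P>)"

definition linear_invariant ::
  "('l \<Rightarrow> ('l,'v::finite,'r) lkind) \<Rightarrow> ('r \<Rightarrow> real measure) \<Rightarrow> 'l
     \<Rightarrow> ('l \<Rightarrow> ('v \<Rightarrow> real) set) \<Rightarrow> bool" where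
  "linear_invariant K \<mu> lin I \<longleftrightarrow>
     (\<forall>l. union_polyhedra (I l)) \<and>
     (\<forall>v\<in>I lin. \<forall>l w. (tstep K \<mu>)\<^sup>*\<^sup>* (lin, v) (l, w) \<longrightarrow> w \<in> I l)"

definition pre_exp ::
  "('l \<Rightarrow> ('l,'v,'r::finite) lkind) \<Rightarrow> ('r \<Rightarrow> real measure)
     \<Rightarrow> ('l \<Rightarrow> ('v \<Rightarrow> real) \<Rightarrow> real) \<Rightarrow> 'l \<Rightarrow> ('v \<Rightarrow> real) \<Rightarrow> real" where
  "pre_exp K \<mu> h l v =
     (case K l of
        Terminal \<Rightarrow> h l v
      | Assign l' F \<Rightarrow> (\<integral>u. h l' (F v u) \<partial>samp \<mu>)
      | Branch \<phi> l1 l2 \<Rightarrow> (if v \<in> \<phi> then h l1 v else h l2 v)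
      | Probab p l1 l2 \<Rightarrow> p * h l1 v + (1 - p) * h l2 v
      | Tick R l' \<Rightarrow> R v + h l' v
      | Nondet l1 l2 \<Rightarrow> max (h l1 v) (h l2 v))"

definition plcs ::
  "('l \<Rightarrow> ('l,'v::finite,'r::finite) lkind) \<Rightarrow> ('r \<Rightarrow> real measure) \<Rightarrow> ('l \<Rightarrow> ('v \<Rightarrow> real) set)
     \<Rightarrow> 'l \<Rightarrow> nat \<Rightarrow> ('l \<Rightarrow> ('v \<Rightarrow> real) \<Rightarrow> real) \<Rightarrow> bool" where
  "plcs K \<mu> I lout d h \<longleftrightarrow>
     (\<forall>l. poly_fun d (h l)) \<and>
     (\<forall>v. h lout v = 0) \<and>
     (\<forall>l v. l \<noteq> lout \<longrightarrow> v \<in> I l \<longrightarrow> pre_exp K \<mu> h l v \<ge> h l v)"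

definition concentration ::
  "('l \<Rightarrow> ('l,'v,'r::finite) lkind) \<Rightarrow> ('r \<Rightarrow> real measure) \<Rightarrow> 'l \<Rightarrow> 'l
     \<Rightarrow> ('l \<Rightarrow> ('v \<Rightarrow> real) set) \<Rightarrow> bool" where
  "concentration K \<mu> lin lout I \<longleftrightarrow>
     (\<forall>v\<in>I lin. \<exists>a b. a > 0 \<and> b > 0 \<and>
        (\<exists>N. \<forall>n\<ge>N. \<forall>\<sigma>. admissible K \<mu> lin v \<sigma> \<longrightarrow>
           measure (omega \<mu>)
             {\<omega>\<in>space (omega \<mu>). \<forall>m\<le>n. fst (run K \<sigma> lin v \<omega> m) \<noteq> lout}
           \<le> a * exp (- b * real n)))"

definition bounded_update ::
  "('l \<Rightarrow> ('l,'v,'r) lkind) \<Rightarrow> ('r \<Rightarrow> real measure) \<Rightarrow> ('l \<Rightarrow> ('v \<Rightarrow> real) set) \<Rightarrow> bool" where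
  "bounded_update K \<mu> I \<longleftrightarrow>
     (\<exists>M>0. \<forall>l l' F. K l = Assign l' F \<longrightarrow>
        (\<forall>v\<in>I l. \<forall>u\<in>sampled \<mu>. \<forall>x. \<bar>F v u x - v x\<bar> \<le> M))"

end

theory Submission
  imports Defs "HOL-Real_Asymp.Real_Asymp"
begin

text \<open>
  Resolve every nondeterministic choice greedily, towards the successor with the larger value
  of \<open>h\<close>. Under this scheduler the pre-expectation condition says that
  \<open>Y\<^sub>n = h(X\<^sub>n) + (cost of the first n steps)\<close> is a submartingale, so
  \<open>E[Y\<^sub>n] \<ge> h(\<ell>\<^sub>i\<^sub>n, v)\<close> for every n. Bounded updates keep the valuation after n steps
  within distance \<open>n M\<close> of the initial one, so \<open>h(X\<^sub>n)\<close> and the step costs grow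
  polynomially in n, and both vanish once the run has terminated. Concentration makes the
  probability of not having terminated decay exponentially, which beats the polynomial growth:
  \<open>E[h(X\<^sub>n)] \<rightarrow> 0\<close> and the expected step costs are absolutely summable. Hence
  \<open>E[Y\<^sub>n]\<close> converges to the expected total cost, which is therefore at least \<open>h(\<ell>\<^sub>i\<^sub>n, v)\<close>.
\<close>

lemma poly_fun_measurable:
  assumes "poly_fun d g" "\<And>z. (\<lambda>\<omega>. W \<omega> z) \<in> borel_measurable M"
  shows "(\<lambda>\<omega>. g (W \<omega>)) \<in> borel_measurable M"
proof -
  from assms(1) obtain E c where g: "\<And>w. g w = (\<Sum>e\<in>E. c e * (\<Prod>x\<in>UNIV. w x ^ e x))"
    unfolding poly_fun_def by blast
  show ?thesis unfolding g using assms(2) by measurable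
qed

lemma is_poly_measurable:
  assumes "is_poly g" "\<And>z. (\<lambda>\<omega>. W \<omega> z) \<in> borel_measurable M"
  shows "(\<lambda>\<omega>. g (W \<omega>)) \<in> borel_measurable M"
  using assms poly_fun_measurable unfolding is_poly_def by blast

lemma is_poly_zero: "is_poly (\<lambda>_. 0)"
  unfolding is_poly_def poly_fun_def by (intro exI[of _ 0] exI[of _ "{}"]) auto

lemma poly_fun_growth:
  assumes "poly_fun d (g :: ('a::finite \<Rightarrow> real) \<Rightarrow> real)"
  shows "\<exists>C\<ge>0. \<forall>B\<ge>1. \<forall>w. (\<forall>z. \<bar>w z\<bar> \<le> B) \<longrightarrow> \<bar>g w\<bar> \<le> C * B ^ d"
proof -
  from assms obtain E c where E: "finite E" "\<forall>e\<in>E. (\<Sum>x\<in>UNIV. e x) \<le> d"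
    and g: "\<And>w. g w = (\<Sum>e\<in>E. c e * (\<Prod>x\<in>UNIV. w x ^ e x))"
    unfolding poly_fun_def by blast
  show ?thesis
  proof (intro exI[of _ "\<Sum>e\<in>E. \<bar>c e\<bar>"] conjI allI impI)
    show "0 \<le> (\<Sum>e\<in>E. \<bar>c e\<bar>)" by (simp add: sum_nonneg)
    fix B :: real and w :: "'a \<Rightarrow> real" assume B: "1 \<le> B" and w: "\<forall>z. \<bar>w z\<bar> \<le> B"
    have "\<bar>g w\<bar> \<le> (\<Sum>e\<in>E. \<bar>c e * (\<Prod>x\<in>UNIV. w x ^ e x)\<bar>)"
      unfolding g by (rule sum_abs)
    also have "\<dots> \<le> (\<Sum>e\<in>E. \<bar>c e\<bar> * B ^ d)"
    proof (rule sum_mono)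
      fix e assume e: "e \<in> E"
      have "\<bar>(\<Prod>x\<in>UNIV. w x ^ e x)\<bar> = (\<Prod>x\<in>UNIV. \<bar>w x\<bar> ^ e x)"
        by (simp add: abs_prod power_abs)
      also have "\<dots> \<le> (\<Prod>x\<in>UNIV. B ^ e x)"
        by (rule prod_mono) (use w in \<open>auto intro: power_mono\<close>)
      also have "\<dots> = B ^ (\<Sum>x\<in>UNIV. e x)" by (simp add: power_sum)
      also have "\<dots> \<le> B ^ d" using E(2) e B by (auto intro: power_increasing)
      finally show "\<bar>c e * (\<Prod>x\<in>UNIV. w x ^ e x)\<bar> \<le> \<bar>c e\<bar> * B ^ d"
        by (simp add: abs_mult mult_left_mono)
    qed
    also have "\<dots> = (\<Sum>e\<in>E. \<bar>c e\<bar>) * B ^ d" by (simp add: sum_distrib_right)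
    finally show "\<bar>g w\<bar> \<le> (\<Sum>e\<in>E. \<bar>c e\<bar>) * B ^ d" .
  qed
qed

lemma finite_family_poly_growth:
  fixes g :: "'i::finite \<Rightarrow> ('a::finite \<Rightarrow> real) \<Rightarrow> real"
  assumes "\<And>i. is_poly (g i)"
  shows "\<exists>C\<ge>0. \<exists>D. \<forall>i. \<forall>B\<ge>1. \<forall>w. (\<forall>z. \<bar>w z\<bar> \<le> B) \<longrightarrow> \<bar>g i w\<bar> \<le> C * B ^ D"
proof -
  have "\<exists>C D. C \<ge> 0 \<and> (\<forall>B\<ge>1. \<forall>w. (\<forall>z. \<bar>w z\<bar> \<le> B) \<longrightarrow> \<bar>g i w\<bar> \<le> C * B ^ D)" for i
    using assms[of i] poly_fun_growth unfolding is_poly_def by blast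
  then obtain C D where C: "\<And>i. C i \<ge> 0"
    and CD: "\<And>i B w. 1 \<le> B \<Longrightarrow> (\<forall>z. \<bar>w z\<bar> \<le> B) \<Longrightarrow> \<bar>g i w\<bar> \<le> C i * B ^ D i"
    by metis
  show ?thesis
  proof (intro exI[of _ "\<Sum>i\<in>UNIV. C i"] conjI exI[of _ "Max (range D)"] allI impI)
    show "0 \<le> (\<Sum>i\<in>UNIV. C i)" using C by (simp add: sum_nonneg)
    fix i and B :: real and w :: "'a \<Rightarrow> real"
    assume B: "1 \<le> B" and w: "\<forall>z. \<bar>w z\<bar> \<le> B"
    have "C i \<le> (\<Sum>i\<in>UNIV. C i)" using C by (intro member_le_sum) auto
    moreover have "B ^ D i \<le> B ^ Max (range D)" using B by (intro power_increasing) auto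
    ultimately have "C i * B ^ D i \<le> (\<Sum>i\<in>UNIV. C i) * B ^ Max (range D)"
      using B C by (intro mult_mono) (auto simp: sum_nonneg)
    then show "\<bar>g i w\<bar> \<le> (\<Sum>i\<in>UNIV. C i) * B ^ Max (range D)" using CD[where i=i, OF B w] by linarith
  qed
qed

lemma polynomial_times_exp_decay_tendsto_0:
  fixes A M c :: real
  assumes "c > 0" "M > 0"
  shows "(\<lambda>n. (A + real n * M) ^ D * exp (- (c * real n))) \<longlonglongrightarrow> 0"
  using assms by real_asymp

lemma AE_in_supp_real:
  assumes sets_m: "sets m = sets (borel :: real measure)"
  shows "AE x in m. x \<in> supp_real m"
proof -
  define Q where "Q = {(a, b). a \<in> \<rat> \<and> b \<in> \<rat> \<and> emeasure m {a<..<b} = 0}"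
  have "countable Q"
  proof (rule countable_subset)
    show "Q \<subseteq> \<rat> \<times> \<rat>" unfolding Q_def by auto
    show "countable (\<rat> \<times> (\<rat> :: real set))" by (intro countable_SIGMA countable_rat)
  qed
  then have "AE x in m. \<forall>q\<in>Q. x \<notin> {fst q<..<snd q}"
  proof (rule AE_ball_countable'[rotated])
    fix q assume "q \<in> Q"
    then have "{fst q<..<snd q} \<in> null_sets m" using sets_m by (auto simp: Q_def null_sets_def)
    then show "AE x in m. x \<notin> {fst q<..<snd q}" by (rule AE_not_in)
  qed
  then show ?thesis
  proof (rule AE_mp, intro AE_I2 impI)
    fix x assume H: "\<forall>q\<in>Q. x \<notin> {fst q<..<snd q}"
    show "x \<in> supp_real m" unfolding supp_real_def
    proof (intro CollectI allI impI notI)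
      fix e :: real assume e: "e > 0" and z: "emeasure m {x - e<..<x + e} = 0"
      obtain a where a: "a \<in> \<rat>" "x - e < a" "a < x" using Rats_dense_in_real[of "x - e" x] e by auto
      obtain b where b: "b \<in> \<rat>" "x < b" "b < x + e" using Rats_dense_in_real[of x "x + e"] e by auto
      have "emeasure m {a<..<b} \<le> emeasure m {x - e<..<x + e}"
        using a b sets_m by (intro emeasure_mono) auto
      then have "(a, b) \<in> Q" using a b z unfolding Q_def by auto
      then show False using H a b by fastforce
    qed
  qed
qed

lemma integral_pair_fst:
  fixes f :: "'a \<Rightarrow> real"
  assumes "sigma_finite_measure M" "prob_space N" "integrable (M \<Otimes>\<^sub>M N) (\<lambda>x. f (fst x))"
  shows "(\<integral>x. f (fst x) \<partial>(M \<Otimes>\<^sub>M N)) = (\<integral>u. f u \<partial>M)"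
proof -
  interpret N: prob_space N by fact
  interpret pair_sigma_finite M N
    by (intro pair_sigma_finite.intro assms(1) N.sigma_finite_measure)
  show ?thesis using integral_fst'[OF assms(3)] by (simp add: N.prob_space)
qed

lemma integral_pair_snd:
  fixes g :: "'b \<Rightarrow> real"
  assumes "prob_space M" "sigma_finite_measure N" "integrable (M \<Otimes>\<^sub>M N) (\<lambda>x. g (snd x))"
  shows "(\<integral>x. g (snd x) \<partial>(M \<Otimes>\<^sub>M N)) = (\<integral>c. g c \<partial>N)"
proof -
  interpret M: prob_space M by fact
  interpret pair_sigma_finite M N
    by (intro pair_sigma_finite.intro M.sigma_finite_measure assms(2))
  show ?thesis using integral_fst'[OF assms(3)] by (simp add: M.prob_space)
qed

lemma prob_space_unit_interval: "prob_space (uniform_measure lborel {0..1::real})"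
  by (rule prob_space_uniform_measure) auto

lemma integral_uniform_coin:
  fixes p a b :: real
  assumes p: "0 \<le> p" "p \<le> 1"
  shows "(\<integral>c. (if c < p then a else b) \<partial>uniform_measure lborel {0..1::real}) = p * a + (1 - p) * b"
proof -
  let ?U = "uniform_measure lborel {0..1::real}"
  interpret U: prob_space ?U by (rule prob_space_unit_interval)
  have "emeasure ?U {..<p} = emeasure lborel ({0..1} \<inter> {..<p}) / emeasure lborel {0..1::real}"
    by (rule emeasure_uniform_measure) auto
  also have "{0..1} \<inter> {..<p} = {0..<p}" using p by auto
  finally have "measure ?U {..<p} = p" using p by (simp add: divide_ennreal_def measure_def)
  moreover have "(\<lambda>c. if c < p then a else b) = (\<lambda>c. b + (a - b) * indicator {..<p} c)"
    by (auto simp: indicator_def fun_eq_iff)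
  ultimately show ?thesis by (simp add: U.emeasure_eq_measure algebra_simps)
qed

lemma (in finite_measure) integrable_dominated_by_indicator:
  fixes f :: "'a \<Rightarrow> real"
  assumes f: "f \<in> borel_measurable M" and A: "A \<in> sets M"
    and bound: "AE x in M. \<bar>f x\<bar> \<le> c * indicator A x"
  shows "integrable M f" and "(\<integral>x. \<bar>f x\<bar> \<partial>M) \<le> c * measure M A"
proof -
  have iA: "integrable M (\<lambda>x. c * indicator A x)"
    by (intro integrable_mult_right integrable_real_indicator A) (simp add: less_top[symmetric])
  show "integrable M f"
    by (rule Bochner_Integration.integrable_bound[OF iA f]) (use bound in \<open>eventually_elim, auto\<close>)
  then have "(\<integral>x. \<bar>f x\<bar> \<partial>M) \<le> (\<integral>x. c * indicator A x \<partial>M)"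
    by (intro integral_mono_AE iA bound) auto
  also have "\<dots> = c * measure M A" using A by (simp add: Int_absorb2 sets.sets_into_space)
  finally show "(\<integral>x. \<bar>f x\<bar> \<partial>M) \<le> c * measure M A" .
qed

lemma (in finite_measure) AE_eventually_not_in:
  assumes "\<And>n. A n \<in> sets M" and "(\<lambda>n. measure M (A n)) \<longlonglongrightarrow> 0"
  shows "AE x in M. \<exists>n. x \<notin> A n"
proof -
  have "measure M (\<Inter>n. A n) \<le> 0"
    by (rule LIMSEQ_le_const[OF assms(2)]) (use assms(1) in \<open>auto intro!: finite_measure_mono\<close>)
  then have "(\<Inter>n. A n) \<in> null_sets M"
    using assms(1) by (auto simp: null_sets_def emeasure_eq_measure measure_le_0_iff)
  then show ?thesis by (rule AE_mp[OF AE_not_in]) auto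
qed

lemma (in sequence_space) integral_PiM_case_nat:
  fixes f :: "(nat \<Rightarrow> 'a) \<Rightarrow> real"
  assumes f: "integrable S f"
  shows "integrable M (\<lambda>x. \<integral>\<omega>. f (case_nat x \<omega>) \<partial>S)"
    and "(\<integral>\<omega>. f \<omega> \<partial>S) = (\<integral>x. (\<integral>\<omega>. f (case_nat x \<omega>) \<partial>S) \<partial>M)"
proof -
  interpret P: pair_sigma_finite M S ..
  have cons: "(\<lambda>(x, \<omega>). case_nat x \<omega>) \<in> measurable (M \<Otimes>\<^sub>M S) S"
    by (rule measurable_case_nat'[where f=fst and g=snd, unfolded case_prod_beta[symmetric]]) simp_all
  have f': "f \<in> borel_measurable S" using f by simp
  have i2: "integrable (M \<Otimes>\<^sub>M S) (\<lambda>p. f ((\<lambda>(x, \<omega>). case_nat x \<omega>) p))"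
    using integrable_distr_eq[OF cons f'] f PiM_iter by simp
  show "integrable M (\<lambda>x. \<integral>\<omega>. f (case_nat x \<omega>) \<partial>S)"
    using P.integrable_fst'[OF i2] by simp
  have "(\<integral>\<omega>. f \<omega> \<partial>S) = (\<integral>\<omega>. f \<omega> \<partial>distr (M \<Otimes>\<^sub>M S) S (\<lambda>(x, \<omega>). case_nat x \<omega>))"
    by (simp add: PiM_iter)
  also have "\<dots> = (\<integral>p. f ((\<lambda>(x, \<omega>). case_nat x \<omega>) p) \<partial>(M \<Otimes>\<^sub>M S))"
    by (rule integral_distr[OF cons f'])
  also have "\<dots> = (\<integral>x. (\<integral>\<omega>. f (case_nat x \<omega>) \<partial>S) \<partial>M)"
    using P.integral_fst'[OF i2, symmetric] by simp
  finally show "(\<integral>\<omega>. f \<omega> \<partial>S) = (\<integral>x. (\<integral>\<omega>. f (case_nat x \<omega>) \<partial>S) \<partial>M)" .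
qed


section \<open>The greedy scheduler and its runs\<close>

definition greedy_sched ::
  "('l \<Rightarrow> ('l,'v,'r) lkind) \<Rightarrow> ('l \<Rightarrow> ('v \<Rightarrow> real) \<Rightarrow> real) \<Rightarrow> ('l,'v) scheduler" where
  "greedy_sched K h hs = (case K (fst (last hs)) of
      Nondet l1 l2 \<Rightarrow> h l2 (snd (last hs)) \<le> h l1 (snd (last hs))
    | _ \<Rightarrow> True)"

definition greedy_step ::
  "('l \<Rightarrow> ('l,'v,'r) lkind) \<Rightarrow> ('l \<Rightarrow> ('v \<Rightarrow> real) \<Rightarrow> real) \<Rightarrow> ('l,'v) config
     \<Rightarrow> ('r \<Rightarrow> real) \<times> real \<Rightarrow> ('l,'v) config" where
  "greedy_step K h s uc = (case K (fst s) of
        Assign l' F \<Rightarrow> (l', F (snd s) (fst uc))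
      | Branch \<phi> l1 l2 \<Rightarrow> (if snd s \<in> \<phi> then l1 else l2, snd s)
      | Probab p l1 l2 \<Rightarrow> (if snd uc < p then l1 else l2, snd s)
      | Nondet l1 l2 \<Rightarrow> (if h l2 (snd s) \<le> h l1 (snd s) then l1 else l2, snd s)
      | Tick R l' \<Rightarrow> (l', snd s)
      | Terminal \<Rightarrow> s)"

primrec greedy_run ::
  "('l \<Rightarrow> ('l,'v,'r) lkind) \<Rightarrow> ('l \<Rightarrow> ('v \<Rightarrow> real) \<Rightarrow> real) \<Rightarrow> ('l,'v) config
     \<Rightarrow> (nat \<Rightarrow> ('r \<Rightarrow> real) \<times> real) \<Rightarrow> nat \<Rightarrow> ('l,'v) config" where
  "greedy_run K h s \<omega> 0 = s"
| "greedy_run K h s \<omega> (Suc n) = greedy_step K h (greedy_run K h s \<omega> n) (\<omega> n)"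

lemma step_greedy_sched: "step K (greedy_sched K h) hs uc = greedy_step K h (last hs) uc"
  unfolding step_def greedy_sched_def greedy_step_def Let_def
  by (auto split: lkind.split prod.split)

lemma last_hist_greedy_sched:
  "last (hist K (greedy_sched K h) lin v \<omega> n) = greedy_run K h (lin, v) \<omega> n"
  by (induction n) (simp_all add: step_greedy_sched)

lemma run_greedy_sched: "run K (greedy_sched K h) lin v \<omega> n = greedy_run K h (lin, v) \<omega> n"
  unfolding run_def by (rule last_hist_greedy_sched)

lemma greedy_run_case_nat:
  "greedy_run K h s (case_nat x \<omega>) (Suc n) = greedy_run K h (greedy_step K h s x) \<omega> n"
  by (induction n) simp_all

lemma greedy_run_terminal:
  assumes "K lout = Terminal" "fst (greedy_run K h s \<omega> n) = lout" "n \<le> m"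
  shows "greedy_run K h s \<omega> m = greedy_run K h s \<omega> n"
  using assms(3)
proof (induction m)
  case (Suc m)
  show ?case
  proof (cases "n = Suc m")
    case False
    with Suc have "greedy_run K h s \<omega> m = greedy_run K h s \<omega> n" by simp
    then show ?thesis using assms(1,2) by (simp add: greedy_step_def)
  qed simp
qed simp

text \<open>Randomness under which every step of a run is a \<open>tstep\<close> transition. The coin must avoid 1:
  for \<open>p = 1\<close> the coin value 1 selects the second successor, which is not a transition.\<close>
definition regular_step :: "('r \<Rightarrow> real measure) \<Rightarrow> ('r \<Rightarrow> real) \<times> real \<Rightarrow> bool" where
  "regular_step \<mu> uc \<longleftrightarrow> fst uc \<in> sampled \<mu> \<and> 0 \<le> snd uc \<and> snd uc < 1"

lemma tstep_greedy_step:
  assumes "regular_step \<mu> uc"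
  shows "tstep K \<mu> s (greedy_step K h s uc)"
proof -
  obtain l w where s: "s = (l, w)" by (cases s)
  obtain u c where uc: "uc = (u, c)" by (cases uc)
  show ?thesis
  proof (cases "K l")
    case (Branch \<phi> l1 l2)
    then show ?thesis using tstep.t_branch[of K l \<phi> l1 l2 \<mu> w] by (simp add: s greedy_step_def)
  next
    case (Probab p l1 l2)
    then show ?thesis using assms
      by (auto simp: s uc greedy_step_def regular_step_def intro: tstep.t_prob1 tstep.t_prob2)
  qed (use assms in \<open>auto simp: s uc greedy_step_def regular_step_def intro: tstep.intros\<close>)
qed

lemma rtranclp_tstep_greedy_run:
  assumes "\<forall>n. regular_step \<mu> (\<omega> n)"
  shows "(tstep K \<mu>)\<^sup>*\<^sup>* s (greedy_run K h s \<omega> n)"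
proof (induction n)
  case (Suc n)
  have "tstep K \<mu> (greedy_run K h s \<omega> n) (greedy_run K h s \<omega> (Suc n))"
    using tstep_greedy_step[OF assms[rule_format, of n]] by simp
  with Suc show ?case by simp
qed simp

definition config_measurable :: "'a measure \<Rightarrow> ('a \<Rightarrow> ('l,'v) config) \<Rightarrow> bool" where
  "config_measurable M f \<longleftrightarrow> (\<lambda>\<omega>. fst (f \<omega>)) \<in> measurable M (count_space UNIV) \<and>
      (\<forall>x. (\<lambda>\<omega>. snd (f \<omega>) x) \<in> borel_measurable M)"

lemma config_measurable_const: "config_measurable M (\<lambda>_. s)"
  by (simp add: config_measurable_def)

lemma config_measurable_PiM:
  "config_measurable M f \<Longrightarrow>
     (\<lambda>\<omega>. snd (f \<omega>)) \<in> measurable M (PiM UNIV (\<lambda>_::'v. borel :: real measure))"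
  unfolding config_measurable_def by (intro measurable_PiM_single') (simp_all add: Pi_iff)

lemma config_measurable_poly:
  fixes f :: "'a \<Rightarrow> ('l::countable, 'v::finite) config"
  assumes "config_measurable M f" "\<And>l. is_poly (G l)"
  shows "(\<lambda>\<omega>. G (fst (f \<omega>)) (snd (f \<omega>))) \<in> borel_measurable M"
proof (rule measurable_compose_countable'[where f="\<lambda>l \<omega>. G l (snd (f \<omega>))" and I=UNIV])
  show "(\<lambda>\<omega>. G l (snd (f \<omega>))) \<in> borel_measurable M" for l
    using is_poly_measurable[OF assms(2), of "\<lambda>\<omega>. snd (f \<omega>)" M] assms(1)
    by (simp add: config_measurable_def)
  show "(\<lambda>\<omega>. fst (f \<omega>)) \<in> measurable M (count_space UNIV)"
    using assms(1) by (simp add: config_measurable_def)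
qed simp

lemma is_poly_cost:
  assumes "valid_cfg K lout \<mu>"
  shows "is_poly (\<lambda>w. cost K (l, w))"
proof (cases "K l")
  case (Tick R l')
  then have "is_poly R" using assms unfolding valid_cfg_def by blast
  then show ?thesis using Tick by (simp add: cost_def)
qed (simp_all add: cost_def is_poly_zero)

lemma plcs_cost_growth:
  fixes h :: "'l::finite \<Rightarrow> ('v::finite \<Rightarrow> real) \<Rightarrow> real"
  assumes "valid_cfg K lout \<mu>" "plcs K \<mu> I lout d h"
  shows "\<exists>C\<ge>0. \<exists>D. \<forall>l B w. 1 \<le> B \<longrightarrow> (\<forall>z. \<bar>w z\<bar> \<le> B) \<longrightarrow>
           \<bar>h l w\<bar> \<le> C * B ^ D \<and> \<bar>cost K (l, w)\<bar> \<le> C * B ^ D"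
proof -
  define g where "g = (\<lambda>(b, l) w. if b then h l w else cost K (l, w))"
  have "is_poly (h l)" for l
    using assms(2) unfolding plcs_def is_poly_def by blast
  then have "is_poly (g i)" for i :: "bool \<times> 'l"
    using is_poly_cost[OF assms(1)] by (cases i, cases "fst i") (simp_all add: g_def)
  then obtain C D where "C \<ge> 0"
    and CD: "\<forall>i. \<forall>B\<ge>1. \<forall>w. (\<forall>z. \<bar>w z\<bar> \<le> B) \<longrightarrow> \<bar>g i w\<bar> \<le> C * B ^ D"
    using finite_family_poly_growth by blast
  moreover have "\<bar>h l w\<bar> \<le> C * B ^ D \<and> \<bar>cost K (l, w)\<bar> \<le> C * B ^ D"
    if "1 \<le> B" "\<forall>z. \<bar>w z\<bar> \<le> B" for l B w
    using CD[rule_format, where i="(True, l)"] CD[rule_format, where i="(False, l)"] that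
    by (simp add: g_def)
  ultimately show ?thesis by blast
qed

locale plcs_bounds =
  fixes K :: "'l::finite \<Rightarrow> ('l, 'v::finite, 'r::finite) lkind"
    and \<mu> :: "'r \<Rightarrow> real measure"
    and lin lout :: 'l
    and I :: "'l \<Rightarrow> ('v \<Rightarrow> real) set"
    and h :: "'l \<Rightarrow> ('v \<Rightarrow> real) \<Rightarrow> real"
    and d :: nat
    and v :: "'v \<Rightarrow> real"
    and M C :: real
    and D :: nat
  assumes valid: "valid_cfg K lout \<mu>"
    and inv: "linear_invariant K \<mu> lin I"
    and plcs: "plcs K \<mu> I lout d h"
    and conc: "concentration K \<mu> lin lout I"
    and v_in_I: "v \<in> I lin"
    and M_pos: "M > 0"
    and update_bound: "\<And>l l' F w u x. K l = Assign l' F \<Longrightarrow> w \<in> I l \<Longrightarrow> u \<in> sampled \<mu> \<Longrightarrow>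
                         \<bar>F w u x - w x\<bar> \<le> M"
    and C_nonneg: "0 \<le> C"
    and growth: "\<And>l B w. 1 \<le> B \<Longrightarrow> (\<forall>z. \<bar>w z\<bar> \<le> B) \<Longrightarrow>
                   \<bar>h l w\<bar> \<le> C * B ^ D \<and> \<bar>cost K (l, w)\<bar> \<le> C * B ^ D"
begin

lemma K_lout: "K lout = Terminal"
  using valid unfolding valid_cfg_def by blast

lemma prob_space_\<mu>: "prob_space (\<mu> r)"
  using valid unfolding valid_cfg_def by blast

lemma sets_\<mu>: "sets (\<mu> r) = sets borel"
  using valid unfolding valid_cfg_def by blast

lemma poly_update_Assign: "K l = Assign l' F \<Longrightarrow> poly_update F"
  using valid unfolding valid_cfg_def by blast

lemma sets_Branch:
  "K l = Branch \<phi> l1 l2 \<Longrightarrow> \<phi> \<in> sets (PiM (UNIV :: 'v set) (\<lambda>_. borel :: real measure))"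
  using valid unfolding valid_cfg_def by blast

lemma Probab_range: "K l = Probab p l1 l2 \<Longrightarrow> 0 \<le> p \<and> p \<le> 1"
  using valid unfolding valid_cfg_def by blast

lemma is_poly_h: "is_poly (h l)"
  using plcs unfolding plcs_def is_poly_def by blast

lemma h_lout: "h lout w = 0"
  using plcs unfolding plcs_def by blast

lemma prob_space_samp: "prob_space (samp \<mu>)"
  unfolding samp_def by (rule prob_space_PiM) (rule prob_space_\<mu>)

lemma prob_space_step_space: "prob_space (step_space \<mu>)"
  unfolding step_space_def by (intro prob_space_pair prob_space_samp prob_space_unit_interval)

lemma prob_space_omega: "prob_space (omega \<mu>)"
  unfolding omega_def by (rule prob_space_PiM) (rule prob_space_step_space)

lemma measurable_sample_step_space: "(\<lambda>uc. fst uc r) \<in> borel_measurable (step_space \<mu>)"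
proof -
  have "(\<lambda>u. u r) \<in> measurable (samp \<mu>) (\<mu> r)" unfolding samp_def by simp
  then have "(\<lambda>u. u r) \<in> borel_measurable (samp \<mu>)"
    by (simp add: measurable_cong_sets[OF refl sets_\<mu>])
  then show ?thesis unfolding step_space_def by measurable
qed

lemma measurable_coin_step_space: "snd \<in> borel_measurable (step_space \<mu>)"
proof -
  have "(\<lambda>c. c) \<in> borel_measurable (uniform_measure lborel {0..1::real})"
    by (simp add: measurable_cong_sets[OF refl sets_uniform_measure])
  then show ?thesis unfolding step_space_def by measurable
qed

lemma measurable_h_config: "config_measurable N f \<Longrightarrow> (\<lambda>\<omega>. h (fst (f \<omega>)) (snd (f \<omega>))) \<in> borel_measurable N"
  using config_measurable_poly[of N f h] is_poly_h by simp

lemma measurable_cost_config: "config_measurable N f \<Longrightarrow> (\<lambda>\<omega>. cost K (f \<omega>)) \<in> borel_measurable N"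
  using config_measurable_poly[of N f "\<lambda>l w. cost K (l, w)"] is_poly_cost[OF valid] by simp

lemma measurable_greedy_label:
  assumes f: "config_measurable N f" and g: "g \<in> measurable N (step_space \<mu>)"
  shows "(\<lambda>\<omega>. fst (greedy_step K h (l, snd (f \<omega>)) (g \<omega>))) \<in> measurable N (count_space UNIV)"
proof (cases "K l")
  case (Branch \<phi> l1 l2)
  have "(\<lambda>\<omega>. snd (f \<omega>)) -` \<phi> \<inter> space N \<in> sets N"
    by (rule measurable_sets[OF config_measurable_PiM[OF f] sets_Branch[OF Branch]])
  moreover have "(\<lambda>\<omega>. snd (f \<omega>)) -` \<phi> \<inter> space N = {\<omega> \<in> space N. snd (f \<omega>) \<in> \<phi>}" by blast
  ultimately have "(\<lambda>\<omega>. if \<omega> \<in> {\<omega> \<in> space N. snd (f \<omega>) \<in> \<phi>} then l1 else l2)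
      \<in> measurable N (count_space UNIV)"
    by (intro measurable_If_set) auto
  moreover have "\<And>\<omega>. \<omega> \<in> space N \<Longrightarrow> (if \<omega> \<in> {\<omega> \<in> space N. snd (f \<omega>) \<in> \<phi>} then l1 else l2) =
      fst (greedy_step K h (l, snd (f \<omega>)) (g \<omega>))"
    using Branch by (simp add: greedy_step_def)
  ultimately show ?thesis by (rule measurable_cong[THEN iffD1, rotated])
next
  case (Probab p l1 l2)
  have "(\<lambda>\<omega>. snd (g \<omega>)) \<in> borel_measurable N"
    using measurable_compose[OF g measurable_coin_step_space] by simp
  then have "(\<lambda>\<omega>. if snd (g \<omega>) < p then l1 else l2) \<in> measurable N (count_space UNIV)"
    by measurable
  then show ?thesis using Probab by (simp add: greedy_step_def)
next
  case (Nondet l1 l2)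
  have "(\<lambda>\<omega>. h l' (snd (f \<omega>))) \<in> borel_measurable N" for l'
    using is_poly_measurable[OF is_poly_h, of "\<lambda>\<omega>. snd (f \<omega>)" N] f
    by (simp add: config_measurable_def)
  then have "(\<lambda>\<omega>. if h l2 (snd (f \<omega>)) \<le> h l1 (snd (f \<omega>)) then l1 else l2)
      \<in> measurable N (count_space UNIV)"
    by measurable
  then show ?thesis using Nondet by (simp add: greedy_step_def)
qed (simp_all add: greedy_step_def)

lemma measurable_greedy_valuation:
  assumes f: "config_measurable N f" and g: "g \<in> measurable N (step_space \<mu>)"
  shows "(\<lambda>\<omega>. snd (greedy_step K h (l, snd (f \<omega>)) (g \<omega>)) x) \<in> borel_measurable N"
proof (cases "K l")
  case (Assign l' F)
  have "is_poly (\<lambda>w :: ('v + 'r) \<Rightarrow> real. F (\<lambda>y. w (Inl y)) (\<lambda>r. w (Inr r)) x)"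
    using poly_update_Assign[OF Assign] unfolding poly_update_def by blast
  then have "(\<lambda>\<omega>. (\<lambda>w :: ('v + 'r) \<Rightarrow> real. F (\<lambda>y. w (Inl y)) (\<lambda>r. w (Inr r)) x)
              (\<lambda>z. case z of Inl y \<Rightarrow> snd (f \<omega>) y | Inr r \<Rightarrow> fst (g \<omega>) r)) \<in> borel_measurable N"
  proof (rule is_poly_measurable)
    show "(\<lambda>\<omega>. case z of Inl y \<Rightarrow> snd (f \<omega>) y | Inr r \<Rightarrow> fst (g \<omega>) r) \<in> borel_measurable N"
      for z :: "'v + 'r"
      using f measurable_compose[OF g measurable_sample_step_space]
      by (cases z) (simp_all add: config_measurable_def)
  qed
  then show ?thesis using Assign by (simp add: greedy_step_def)
qed (use f in \<open>simp_all add: greedy_step_def config_measurable_def\<close>)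

lemma config_measurable_greedy_step:
  assumes f: "config_measurable N f" and g: "g \<in> measurable N (step_space \<mu>)"
  shows "config_measurable N (\<lambda>\<omega>. greedy_step K h (f \<omega>) (g \<omega>))"
  unfolding config_measurable_def
proof (intro conjI allI)
  have fst_f: "(\<lambda>\<omega>. fst (f \<omega>)) \<in> measurable N (count_space UNIV)"
    using f by (simp add: config_measurable_def)
  show "(\<lambda>\<omega>. fst (greedy_step K h (f \<omega>) (g \<omega>))) \<in> measurable N (count_space UNIV)"
    using measurable_compose_countable'[where f="\<lambda>l \<omega>. fst (greedy_step K h (l, snd (f \<omega>)) (g \<omega>))",
        OF measurable_greedy_label[OF f g] fst_f]
    by simp
  show "(\<lambda>\<omega>. snd (greedy_step K h (f \<omega>) (g \<omega>)) x) \<in> borel_measurable N" for x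
    using measurable_compose_countable'[where f="\<lambda>l \<omega>. snd (greedy_step K h (l, snd (f \<omega>)) (g \<omega>)) x",
        OF measurable_greedy_valuation[OF f g] fst_f]
    by simp
qed

lemma config_measurable_greedy_run: "config_measurable (omega \<mu>) (\<lambda>\<omega>. greedy_run K h s \<omega> n)"
proof (induction n)
  case (Suc n)
  have "(\<lambda>\<omega>. \<omega> n) \<in> measurable (omega \<mu>) (step_space \<mu>)" by (simp add: omega_def)
  then show ?case using config_measurable_greedy_step[OF Suc] by simp
qed (simp add: config_measurable_def)

lemma admissible_greedy_sched: "admissible K \<mu> lin v (greedy_sched K h)"
  unfolding admissible_def
proof
  fix n
  let ?f = "\<lambda>\<omega>. greedy_run K h (lin, v) \<omega> n"
  have f: "config_measurable (omega \<mu>) ?f" by (rule config_measurable_greedy_run)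
  have "(\<lambda>\<omega>. case K l of Nondet l1 l2 \<Rightarrow> h l2 (snd (?f \<omega>)) \<le> h l1 (snd (?f \<omega>)) | _ \<Rightarrow> True)
      \<in> measurable (omega \<mu>) (count_space UNIV)" for l
  proof -
    have h_f: "(\<lambda>\<omega>. h l' (snd (?f \<omega>))) \<in> borel_measurable (omega \<mu>)" for l'
      using is_poly_measurable[OF is_poly_h, of "\<lambda>\<omega>. snd (?f \<omega>)" "omega \<mu>"] f
      by (simp add: config_measurable_def)
    show ?thesis
    proof (cases "K l")
      case (Nondet l1 l2)
      then show ?thesis using borel_measurable_le[OF h_f[of l2] h_f[of l1]] by simp
    qed simp_all
  qed
  then have "(\<lambda>\<omega>. (\<lambda>l \<omega>. case K l of Nondet l1 l2 \<Rightarrow> h l2 (snd (?f \<omega>)) \<le> h l1 (snd (?f \<omega>))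
                                | _ \<Rightarrow> True) (fst (?f \<omega>)) \<omega>) \<in> measurable (omega \<mu>) (count_space UNIV)"
    by (rule measurable_compose_countable'[where I=UNIV]) (use f in \<open>simp_all add: config_measurable_def\<close>)
  then show "(\<lambda>\<omega>. greedy_sched K h (hist K (greedy_sched K h) lin v \<omega> n)) \<in> measurable (omega \<mu>) (count_space UNIV)"
    unfolding greedy_sched_def last_hist_greedy_sched by simp
qed

lemma AE_sampled: "AE u in samp \<mu>. u \<in> sampled \<mu>"
proof -
  have "AE u in PiM UNIV \<mu>. u r \<in> supp_real (\<mu> r)" for r
    by (rule AE_PiM_component) (simp_all add: prob_space_\<mu> AE_in_supp_real[OF sets_\<mu>])
  then have "AE u in samp \<mu>. \<forall>r. u r \<in> supp_real (\<mu> r)"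
    unfolding samp_def by (subst AE_all_countable) simp
  then show ?thesis unfolding sampled_def by simp
qed

lemma AE_regular_step: "AE uc in step_space \<mu>. regular_step \<mu> uc"
proof -
  let ?U = "uniform_measure lborel {0..1::real}"
  interpret U: prob_space ?U by (rule prob_space_unit_interval)
  interpret S: prob_space "samp \<mu>" by (rule prob_space_samp)
  interpret P: pair_sigma_finite "samp \<mu>" ?U ..
  have "AE uc in step_space \<mu>. fst uc \<in> sampled \<mu>"
  proof (rule AE_distrD[of fst "step_space \<mu>" "samp \<mu>"])
    show "fst \<in> measurable (step_space \<mu>) (samp \<mu>)" unfolding step_space_def by simp
    show "AE x in distr (step_space \<mu>) (samp \<mu>) fst. x \<in> sampled \<mu>"
      unfolding step_space_def U.distr_pair_fst by (rule AE_sampled)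
  qed
  moreover have "AE uc in step_space \<mu>. 0 \<le> snd uc \<and> snd uc < 1"
    unfolding step_space_def
  proof (rule P.AE_pair_measure)
    have [measurable]: "snd \<in> borel_measurable (samp \<mu> \<Otimes>\<^sub>M ?U)"
      using measurable_coin_step_space unfolding step_space_def .
    show "{x \<in> space (samp \<mu> \<Otimes>\<^sub>M ?U). 0 \<le> snd x \<and> snd x < 1} \<in> sets (samp \<mu> \<Otimes>\<^sub>M ?U)"
      by measurable
    have "AE c in ?U. 0 \<le> c \<and> c < 1"
      by (subst AE_uniform_measure)
         (use AE_lborel_singleton[of "1::real"] in \<open>auto elim: eventually_mono\<close>)
    then show "AE x in samp \<mu>. AE y in ?U. 0 \<le> snd (x, y) \<and> snd (x, y) < 1" by simp
  qed
  ultimately show ?thesis unfolding regular_step_def by eventually_elim auto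
qed

lemma AE_regular_run: "AE \<omega> in omega \<mu>. \<forall>n. regular_step \<mu> (\<omega> n)"
  unfolding omega_def AE_all_countable
  by (intro allI AE_PiM_component prob_space_step_space AE_regular_step) auto

definition reachable :: "('l,'v) config \<Rightarrow> bool" where
  "reachable s \<longleftrightarrow> (tstep K \<mu>)\<^sup>*\<^sup>* (lin, v) s"

lemma reachable_initial: "reachable (lin, v)"
  unfolding reachable_def by simp

lemma reachable_in_I:
  assumes "reachable s"
  shows "snd s \<in> I (fst s)"
proof -
  have "(tstep K \<mu>)\<^sup>*\<^sup>* (lin, v) (fst s, snd s)" using assms by (simp add: reachable_def)
  then show ?thesis using inv v_in_I unfolding linear_invariant_def by blast
qed

lemma reachable_greedy_step: "reachable s \<Longrightarrow> regular_step \<mu> uc \<Longrightarrow> reachable (greedy_step K h s uc)"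
  unfolding reachable_def using tstep_greedy_step by (metis rtranclp.rtrancl_into_rtrancl)

lemma reachable_greedy_run:
  "reachable s \<Longrightarrow> \<forall>n. regular_step \<mu> (\<omega> n) \<Longrightarrow> reachable (greedy_run K h s \<omega> n)"
  unfolding reachable_def using rtranclp_tstep_greedy_run by (metis rtranclp_trans)

subsection \<open>Polynomial growth along runs\<close>

definition config_size :: "('l,'v) config \<Rightarrow> real" where
  "config_size s = 1 + (\<Sum>x\<in>UNIV. \<bar>snd s x\<bar>)"

lemma config_size_ge_1: "config_size s \<ge> 1"
  unfolding config_size_def by (simp add: sum_nonneg)

lemma abs_le_config_size: "\<bar>snd s x\<bar> \<le> config_size s"
  using member_le_sum[of x UNIV "\<lambda>x. \<bar>snd s x\<bar>"] unfolding config_size_def by simp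

lemma greedy_step_bounded:
  assumes "reachable s" "regular_step \<mu> uc"
  shows "\<bar>snd (greedy_step K h s uc) x - snd s x\<bar> \<le> M"
proof -
  obtain l w where s: "s = (l, w)" by (cases s)
  have "w \<in> I l" using reachable_in_I[OF assms(1)] s by simp
  moreover have "fst uc \<in> sampled \<mu>" using assms(2) by (simp add: regular_step_def)
  ultimately show ?thesis
    using M_pos update_bound by (cases "K l") (simp_all add: s greedy_step_def)
qed

lemma greedy_run_bounded:
  assumes "reachable s" "\<forall>n. regular_step \<mu> (\<omega> n)"
  shows "\<bar>snd (greedy_run K h s \<omega> n) x\<bar> \<le> config_size s + real n * M"
proof (induction n)
  case 0 then show ?case using abs_le_config_size[of s x] by simp
next
  case (Suc n)
  have "\<bar>snd (greedy_run K h s \<omega> (Suc n)) x - snd (greedy_run K h s \<omega> n) x\<bar> \<le> M"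
    using greedy_step_bounded[OF reachable_greedy_run[OF assms] assms(2)[rule_format, of n]] by simp
  then show ?case using Suc by (simp add: algebra_simps)
qed

definition h_conf :: "('l,'v) config \<Rightarrow> real" where
  "h_conf s = h (fst s) (snd s)"

lemma greedy_run_growth:
  assumes "reachable s" "\<forall>n. regular_step \<mu> (\<omega> n)" "m \<le> n"
  shows "\<bar>h_conf (greedy_run K h s \<omega> m)\<bar> \<le> C * (config_size s + real n * M) ^ D"
    and "\<bar>cost K (greedy_run K h s \<omega> m)\<bar> \<le> C * (config_size s + real n * M) ^ D"
proof -
  have "real m * M \<le> real n * M" using assms(3) M_pos by (intro mult_right_mono) auto
  then have "\<bar>snd (greedy_run K h s \<omega> m) z\<bar> \<le> config_size s + real n * M" for z
    using greedy_run_bounded[OF assms(1,2), of m z] by linarith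
  moreover have "1 \<le> config_size s + real n * M"
    using config_size_ge_1[of s] M_pos by (simp add: add_increasing2)
  ultimately show "\<bar>h_conf (greedy_run K h s \<omega> m)\<bar> \<le> C * (config_size s + real n * M) ^ D"
    and "\<bar>cost K (greedy_run K h s \<omega> m)\<bar> \<le> C * (config_size s + real n * M) ^ D"
    using growth[of _ "snd (greedy_run K h s \<omega> m)" "fst (greedy_run K h s \<omega> m)"]
    by (simp_all add: h_conf_def)
qed

subsection \<open>The submartingale\<close>

definition Y :: "nat \<Rightarrow> ('l,'v) config \<Rightarrow> (nat \<Rightarrow> ('r \<Rightarrow> real) \<times> real) \<Rightarrow> real" where
  "Y n s \<omega> = h_conf (greedy_run K h s \<omega> n) + (\<Sum>m<n. cost K (greedy_run K h s \<omega> m))"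

lemma measurable_Y: "Y n s \<in> borel_measurable (omega \<mu>)"
  unfolding Y_def[abs_def] h_conf_def
  using measurable_h_config[OF config_measurable_greedy_run]
        measurable_cost_config[OF config_measurable_greedy_run]
  by measurable

lemma abs_Y_le:
  assumes "reachable s" "\<forall>n. regular_step \<mu> (\<omega> n)"
  shows "\<bar>Y n s \<omega>\<bar> \<le> real (Suc n) * (C * (config_size s + real n * M) ^ D)"
proof -
  let ?B = "C * (config_size s + real n * M) ^ D"
  have "\<bar>Y n s \<omega>\<bar> \<le> \<bar>h_conf (greedy_run K h s \<omega> n)\<bar> + \<bar>\<Sum>m<n. cost K (greedy_run K h s \<omega> m)\<bar>"
    unfolding Y_def by (rule abs_triangle_ineq)
  also have "\<dots> \<le> ?B + (\<Sum>m<n. ?B)"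
    using greedy_run_growth[OF assms] by (intro add_mono order_trans[OF sum_abs] sum_mono) auto
  finally show ?thesis by (simp add: algebra_simps)
qed

lemma integrable_Y:
  assumes "reachable s"
  shows "integrable (omega \<mu>) (Y n s)"
proof (rule finite_measure.integrable_const_bound[OF prob_space_omega[THEN prob_space.finite_measure]])
  show "AE \<omega> in omega \<mu>. norm (Y n s \<omega>) \<le> real (Suc n) * (C * (config_size s + real n * M) ^ D)"
    using AE_regular_run by eventually_elim (use abs_Y_le[OF assms] in simp)
qed (rule measurable_Y)

lemma integrable_h_greedy_step:
  assumes "reachable s"
  shows "integrable (step_space \<mu>) (\<lambda>x. h_conf (greedy_step K h s x))"
proof (rule finite_measure.integrable_const_bound[OF prob_space_step_space[THEN prob_space.finite_measure]])
  have "1 \<le> config_size s + M" using config_size_ge_1[of s] M_pos by simp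
  moreover have "\<bar>snd (greedy_step K h s x) z\<bar> \<le> config_size s + M" if "regular_step \<mu> x" for x z
    using greedy_step_bounded[OF assms that, of z] abs_le_config_size[of s z] by linarith
  ultimately show "AE x in step_space \<mu>. norm (h_conf (greedy_step K h s x)) \<le> C * (config_size s + M) ^ D"
    using AE_regular_step growth unfolding h_conf_def by (auto elim!: eventually_mono)
  show "(\<lambda>x. h_conf (greedy_step K h s x)) \<in> borel_measurable (step_space \<mu>)"
    unfolding h_conf_def
    by (rule measurable_h_config[OF config_measurable_greedy_step[OF config_measurable_const]]) simp
qed

lemma Y_Suc_case_nat: "Y (Suc n) s (case_nat x \<omega>) = cost K s + Y n (greedy_step K h s x) \<omega>"
proof -
  have "(\<Sum>m<Suc n. cost K (greedy_run K h s (case_nat x \<omega>) m)) =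
     cost K s + (\<Sum>m<n. cost K (greedy_run K h s (case_nat x \<omega>) (Suc m)))"
    by (subst sum.lessThan_Suc_shift) simp
  then show ?thesis unfolding Y_def greedy_run_case_nat by simp
qed

lemma cost_plus_integral_h_greedy_step:
  assumes "reachable s"
  shows "cost K s + (\<integral>x. h_conf (greedy_step K h s x) \<partial>step_space \<mu>) = pre_exp K \<mu> h (fst s) (snd s)"
proof -
  interpret S: prob_space "step_space \<mu>" by (rule prob_space_step_space)
  have sf: "sigma_finite_measure (samp \<mu>)"
    by (rule prob_space_imp_sigma_finite[OF prob_space_samp])
  have sf': "sigma_finite_measure (uniform_measure lborel {0..1::real})"
    by (rule prob_space_imp_sigma_finite[OF prob_space_unit_interval])
  obtain l w where s: "s = (l, w)" by (cases s)
  have iH: "integrable (step_space \<mu>) (\<lambda>x. h_conf (greedy_step K h s x))"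
    by (rule integrable_h_greedy_step[OF assms])
  show ?thesis
  proof (cases "K l")
    case (Assign l' F)
    then have "(\<lambda>x. h_conf (greedy_step K h s x)) = (\<lambda>x. h l' (F w (fst x)))"
      by (simp add: fun_eq_iff h_conf_def greedy_step_def s)
    then have "(\<integral>x. h_conf (greedy_step K h s x) \<partial>step_space \<mu>) = (\<integral>u. h l' (F w u) \<partial>samp \<mu>)"
      using iH integral_pair_fst[OF sf prob_space_unit_interval, of "\<lambda>u. h l' (F w u)"]
      by (simp add: step_space_def)
    then show ?thesis using Assign by (simp add: s cost_def pre_exp_def)
  next
    case (Probab p l1 l2)
    then have "(\<lambda>x. h_conf (greedy_step K h s x)) = (\<lambda>x. if snd x < p then h l1 w else h l2 w)"
      by (simp add: fun_eq_iff h_conf_def greedy_step_def s)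
    then have "(\<integral>x. h_conf (greedy_step K h s x) \<partial>step_space \<mu>) = p * h l1 w + (1 - p) * h l2 w"
      using iH integral_pair_snd[OF prob_space_samp sf', of "\<lambda>c. if c < p then h l1 w else h l2 w"]
            integral_uniform_coin Probab_range[OF Probab]
      by (simp add: step_space_def)
    then show ?thesis using Probab by (simp add: s cost_def pre_exp_def)
  qed (simp_all add: s h_conf_def greedy_step_def cost_def pre_exp_def S.prob_space)
qed

lemma h_conf_le_pre_exp: "reachable s \<Longrightarrow> h_conf s \<le> pre_exp K \<mu> h (fst s) (snd s)"
  using plcs reachable_in_I[of s]
  by (cases "fst s = lout") (auto simp: plcs_def h_conf_def pre_exp_def K_lout)

lemma h_conf_le_integral_Y: "reachable s \<Longrightarrow> h_conf s \<le> (\<integral>\<omega>. Y n s \<omega> \<partial>omega \<mu>)"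
proof (induction n arbitrary: s)
  case 0
  interpret O: prob_space "omega \<mu>" by (rule prob_space_omega)
  show ?case by (simp add: Y_def O.prob_space)
next
  case (Suc n)
  interpret Sp: prob_space "step_space \<mu>" by (rule prob_space_step_space)
  interpret O: prob_space "omega \<mu>" by (rule prob_space_omega)
  interpret Sq: sequence_space "step_space \<mu>" ..
  let ?G = "\<lambda>x. \<integral>\<omega>'. Y (Suc n) s (case_nat x \<omega>') \<partial>omega \<mu>"
  have iY: "integrable Sq.S (Y (Suc n) s)"
    using integrable_Y[OF Suc.prems] by (simp add: omega_def)
  have iR: "integrable (step_space \<mu>) (\<lambda>x. cost K s + h_conf (greedy_step K h s x))"
    by (intro Bochner_Integration.integrable_add Sp.integrable_const integrable_h_greedy_step Suc.prems)
  have "AE x in step_space \<mu>. cost K s + h_conf (greedy_step K h s x) \<le> ?G x"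
    using AE_regular_step
  proof eventually_elim
    case (elim x)
    have next_reachable: "reachable (greedy_step K h s x)" by (rule reachable_greedy_step[OF Suc.prems elim])
    have "?G x = (\<integral>\<omega>'. cost K s + Y n (greedy_step K h s x) \<omega>' \<partial>omega \<mu>)"
      by (simp add: Y_Suc_case_nat)
    also have "\<dots> = cost K s + (\<integral>\<omega>'. Y n (greedy_step K h s x) \<omega>' \<partial>omega \<mu>)"
      using integrable_Y[OF next_reachable] by (simp add: O.prob_space)
    finally show ?case using Suc.IH[OF next_reachable] by simp
  qed
  then have "(\<integral>x. cost K s + h_conf (greedy_step K h s x) \<partial>step_space \<mu>) \<le> (\<integral>x. ?G x \<partial>step_space \<mu>)"
    using Sq.integral_PiM_case_nat(1)[OF iY] iR by (intro integral_mono_AE) (simp_all add: omega_def)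
  moreover have "(\<integral>x. cost K s + h_conf (greedy_step K h s x) \<partial>step_space \<mu>) = pre_exp K \<mu> h (fst s) (snd s)"
    using cost_plus_integral_h_greedy_step[OF Suc.prems] integrable_h_greedy_step[OF Suc.prems]
    by (simp add: Sp.prob_space)
  moreover have "(\<integral>x. ?G x \<partial>step_space \<mu>) = (\<integral>\<omega>. Y (Suc n) s \<omega> \<partial>omega \<mu>)"
    using Sq.integral_PiM_case_nat(2)[OF iY] by (simp add: omega_def)
  ultimately show ?case using h_conf_le_pre_exp[OF Suc.prems] by simp
qed

subsection \<open>Termination and the expected total cost\<close>

abbreviation X :: "(nat \<Rightarrow> ('r \<Rightarrow> real) \<times> real) \<Rightarrow> nat \<Rightarrow> ('l,'v) config" where
  "X \<omega> n \<equiv> greedy_run K h (lin, v) \<omega> n"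

definition alive :: "nat \<Rightarrow> (nat \<Rightarrow> ('r \<Rightarrow> real) \<times> real) set" where
  "alive n = {\<omega> \<in> space (omega \<mu>). \<forall>m\<le>n. fst (X \<omega> m) \<noteq> lout}"

definition run_bound :: "nat \<Rightarrow> real" where
  "run_bound n = C * (config_size (lin, v) + real n * M) ^ D"

lemma sets_alive: "alive n \<in> sets (omega \<mu>)"
proof -
  have [measurable]: "(\<lambda>\<omega>. fst (X \<omega> m)) \<in> measurable (omega \<mu>) (count_space UNIV)" for m
    using config_measurable_greedy_run by (simp add: config_measurable_def)
  show ?thesis unfolding alive_def by measurable
qed

lemma AE_abs_le_run_bound:
  "AE \<omega> in omega \<mu>. \<forall>m. \<bar>cost K (X \<omega> m)\<bar> \<le> run_bound m * indicator (alive m) \<omega>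
                      \<and> \<bar>h_conf (X \<omega> m)\<bar> \<le> run_bound m * indicator (alive m) \<omega>"
  using AE_regular_run AE_space
proof eventually_elim
  case (elim \<omega>)
  show ?case
  proof
    fix m
    show "\<bar>cost K (X \<omega> m)\<bar> \<le> run_bound m * indicator (alive m) \<omega>
        \<and> \<bar>h_conf (X \<omega> m)\<bar> \<le> run_bound m * indicator (alive m) \<omega>"
    proof (cases "\<omega> \<in> alive m")
      case True
      then show ?thesis
        using greedy_run_growth[OF reachable_initial elim(1), of m m] by (simp add: run_bound_def)
    next
      case False
      then obtain m' where m': "m' \<le> m" "fst (X \<omega> m') = lout"
        using elim(2) unfolding alive_def by auto
      then have "fst (X \<omega> m) = lout"
        using greedy_run_terminal[OF K_lout m'(2,1)] by simp
      then show ?thesis using False K_lout h_lout by (simp add: cost_def h_conf_def)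
    qed
  qed
qed

lemma
  shows integrable_cost_run: "integrable (omega \<mu>) (\<lambda>\<omega>. cost K (X \<omega> m))"
    and integral_abs_cost_run_le:
      "(\<integral>\<omega>. \<bar>cost K (X \<omega> m)\<bar> \<partial>omega \<mu>) \<le> run_bound m * measure (omega \<mu>) (alive m)"
    and integrable_h_run: "integrable (omega \<mu>) (\<lambda>\<omega>. h_conf (X \<omega> m))"
    and integral_abs_h_run_le:
      "(\<integral>\<omega>. \<bar>h_conf (X \<omega> m)\<bar> \<partial>omega \<mu>) \<le> run_bound m * measure (omega \<mu>) (alive m)"
proof -
  interpret O: prob_space "omega \<mu>" by (rule prob_space_omega)
  have cost_bound: "AE \<omega> in omega \<mu>. \<bar>cost K (X \<omega> m)\<bar> \<le> run_bound m * indicator (alive m) \<omega>"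
    and h_bound: "AE \<omega> in omega \<mu>. \<bar>h_conf (X \<omega> m)\<bar> \<le> run_bound m * indicator (alive m) \<omega>"
    using AE_abs_le_run_bound by (auto elim: eventually_mono)
  have "(\<lambda>\<omega>. h_conf (X \<omega> m)) \<in> borel_measurable (omega \<mu>)"
    unfolding h_conf_def by (rule measurable_h_config[OF config_measurable_greedy_run])
  from O.integrable_dominated_by_indicator[OF this sets_alive h_bound]
  show "integrable (omega \<mu>) (\<lambda>\<omega>. h_conf (X \<omega> m))"
    and "(\<integral>\<omega>. \<bar>h_conf (X \<omega> m)\<bar> \<partial>omega \<mu>) \<le> run_bound m * measure (omega \<mu>) (alive m)" .
  from O.integrable_dominated_by_indicator[OF
      measurable_cost_config[OF config_measurable_greedy_run] sets_alive cost_bound]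
  show "integrable (omega \<mu>) (\<lambda>\<omega>. cost K (X \<omega> m))"
    and "(\<integral>\<omega>. \<bar>cost K (X \<omega> m)\<bar> \<partial>omega \<mu>) \<le> run_bound m * measure (omega \<mu>) (alive m)" .
qed

lemma measure_alive_decay:
  "\<exists>a>0. \<exists>b>0. \<forall>\<^sub>F n in sequentially. measure (omega \<mu>) (alive n) \<le> a * exp (- b * real n)"
proof -
  obtain a b N where "a > 0" "b > 0" and
    N: "\<And>n \<sigma>. n \<ge> N \<Longrightarrow> admissible K \<mu> lin v \<sigma> \<Longrightarrow>
           measure (omega \<mu>) {\<omega>\<in>space (omega \<mu>). \<forall>m\<le>n. fst (run K \<sigma> lin v \<omega> m) \<noteq> lout}
           \<le> a * exp (- b * real n)"
    using conc v_in_I unfolding concentration_def by meson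
  have "\<forall>\<^sub>F n in sequentially. measure (omega \<mu>) (alive n) \<le> a * exp (- b * real n)"
    using eventually_ge_at_top[of N]
    by eventually_elim (use N[OF _ admissible_greedy_sched] in \<open>simp add: alive_def run_greedy_sched\<close>)
  with \<open>a > 0\<close> \<open>b > 0\<close> show ?thesis by blast
qed

lemma run_bound_measure_alive_decay:
  "\<exists>c>0. \<forall>\<^sub>F n in sequentially. run_bound n * measure (omega \<mu>) (alive n) \<le> exp (- c * real n)"
proof -
  obtain a b where "a > 0" "b > 0"
    and decay: "\<forall>\<^sub>F n in sequentially. measure (omega \<mu>) (alive n) \<le> a * exp (- b * real n)"
    using measure_alive_decay by blast
  define c where "c = b / 2"
  have "c > 0" using \<open>b > 0\<close> by (simp add: c_def)
  have "(\<lambda>n. (config_size (lin, v) + real n * M) ^ D * exp (- (c * real n))) \<longlonglongrightarrow> 0"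
    using polynomial_times_exp_decay_tendsto_0[OF \<open>c > 0\<close> M_pos] .
  then have "(\<lambda>n. C * a * ((config_size (lin, v) + real n * M) ^ D * exp (- (c * real n)))) \<longlonglongrightarrow> 0"
    by (rule tendsto_mult_right_zero)
  then have "\<forall>\<^sub>F n in sequentially.
      C * a * ((config_size (lin, v) + real n * M) ^ D * exp (- (c * real n))) < 1"
    by (rule order_tendstoD(2)) simp
  then have small: "\<forall>\<^sub>F n in sequentially. run_bound n * a * exp (- c * real n) \<le> 1"
    by eventually_elim (simp add: run_bound_def mult_ac)
  have "\<forall>\<^sub>F n in sequentially. run_bound n * measure (omega \<mu>) (alive n) \<le> exp (- c * real n)"
    using decay small
  proof eventually_elim
    case (elim n)
    have "0 \<le> real n * M" using M_pos by simp
    then have rb: "0 \<le> run_bound n"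
      using C_nonneg config_size_ge_1[of "(lin, v)"] unfolding run_bound_def by simp
    with elim(1) have "run_bound n * measure (omega \<mu>) (alive n) \<le> run_bound n * (a * exp (- b * real n))"
      by (rule mult_left_mono)
    also have "\<dots> = (run_bound n * a * exp (- c * real n)) * exp (- c * real n)"
      by (simp add: c_def flip: exp_add)
    also have "\<dots> \<le> exp (- c * real n)"
      using elim(2) rb \<open>a > 0\<close> by (intro mult_left_le_one_le) auto
    finally show ?case .
  qed
  with \<open>c > 0\<close> show ?thesis by blast
qed

lemma summable_integral_abs_cost_run: "summable (\<lambda>m. \<integral>\<omega>. norm (cost K (X \<omega> m)) \<partial>omega \<mu>)"
proof -
  obtain c where "c > 0"
    and decay: "\<forall>\<^sub>F n in sequentially. run_bound n * measure (omega \<mu>) (alive n) \<le> exp (- c * real n)"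
    using run_bound_measure_alive_decay by blast
  show ?thesis
  proof (rule summable_comparison_test_ev)
    show "summable (\<lambda>n. exp (- c) ^ n)" using \<open>c > 0\<close> by simp
    show "\<forall>\<^sub>F n in sequentially. norm (\<integral>\<omega>. norm (cost K (X \<omega> n)) \<partial>omega \<mu>) \<le> exp (- c) ^ n"
      using decay
    proof eventually_elim
      case (elim n)
      have "exp (- c) ^ n = exp (- c * real n)"
        by (simp add: exp_of_nat_mult[symmetric] mult.commute)
      moreover have "norm (\<integral>\<omega>. norm (cost K (X \<omega> n)) \<partial>omega \<mu>) = (\<integral>\<omega>. \<bar>cost K (X \<omega> n)\<bar> \<partial>omega \<mu>)"
        by simp
      ultimately show ?case using integral_abs_cost_run_le[of n] elim by linarith
    qed
  qed
qed

lemma integral_h_run_tendsto_0: "(\<lambda>n. \<integral>\<omega>. h_conf (X \<omega> n) \<partial>omega \<mu>) \<longlonglongrightarrow> 0"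
proof -
  obtain c where "c > 0"
    and decay: "\<forall>\<^sub>F n in sequentially. run_bound n * measure (omega \<mu>) (alive n) \<le> exp (- c * real n)"
    using run_bound_measure_alive_decay by blast
  show ?thesis
  proof (rule Lim_null_comparison)
    show "\<forall>\<^sub>F n in sequentially. norm (\<integral>\<omega>. h_conf (X \<omega> n) \<partial>omega \<mu>) \<le> exp (- c * real n)"
      using decay
    proof eventually_elim
      case (elim n)
      have "norm (\<integral>\<omega>. h_conf (X \<omega> n) \<partial>omega \<mu>) \<le> (\<integral>\<omega>. \<bar>h_conf (X \<omega> n)\<bar> \<partial>omega \<mu>)"
        using integral_norm_bound[of "omega \<mu>" "\<lambda>\<omega>. h_conf (X \<omega> n)"] by simp
      then show ?case using integral_abs_h_run_le[of n] elim by linarith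
    qed
    show "(\<lambda>n. exp (- c * real n)) \<longlonglongrightarrow> 0" using \<open>c > 0\<close> by real_asymp
  qed
qed

lemma AE_terminates: "AE \<omega> in omega \<mu>. \<exists>n. \<omega> \<notin> alive n"
proof (rule finite_measure.AE_eventually_not_in[OF prob_space_omega[THEN prob_space.finite_measure] sets_alive])
  obtain a b where "b > 0"
    and decay: "\<forall>\<^sub>F n in sequentially. measure (omega \<mu>) (alive n) \<le> a * exp (- b * real n)"
    using measure_alive_decay by blast
  show "(\<lambda>n. measure (omega \<mu>) (alive n)) \<longlonglongrightarrow> 0"
  proof (rule Lim_null_comparison)
    show "\<forall>\<^sub>F n in sequentially. norm (measure (omega \<mu>) (alive n)) \<le> a * exp (- b * real n)"
      using decay by simp
    show "(\<lambda>n. a * exp (- b * real n)) \<longlonglongrightarrow> 0" using \<open>b > 0\<close> by real_asymp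
  qed
qed

lemma AE_summable_abs_cost_run: "AE \<omega> in omega \<mu>. summable (\<lambda>m. norm (cost K (X \<omega> m)))"
  using AE_terminates AE_abs_le_run_bound
proof eventually_elim
  case (elim \<omega>)
  then obtain n where "\<omega> \<notin> alive n" by blast
  then have "\<omega> \<notin> alive (i + n)" for i
    unfolding alive_def using trans_le_add2 by blast
  then have "cost K (X \<omega> (i + n)) = 0" for i
    using elim(2) by (metis abs_le_zero_iff indicator_simps(2) mult_zero_right)
  then show ?case by (subst summable_iff_shift[of _ n, symmetric]) simp
qed

lemma expected_cost_greedy_sched:
  shows "summable (\<lambda>m. \<integral>\<omega>. cost K (X \<omega> m) \<partial>omega \<mu>)"
    and "expected_cost K \<mu> (greedy_sched K h) lin v = (\<Sum>m. \<integral>\<omega>. cost K (X \<omega> m) \<partial>omega \<mu>)"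
proof -
  note dominated = integrable_cost_run AE_summable_abs_cost_run summable_integral_abs_cost_run
  show "summable (\<lambda>m. \<integral>\<omega>. cost K (X \<omega> m) \<partial>omega \<mu>)"
    by (rule summable_integral[OF dominated])
  show "expected_cost K \<mu> (greedy_sched K h) lin v = (\<Sum>m. \<integral>\<omega>. cost K (X \<omega> m) \<partial>omega \<mu>)"
    unfolding expected_cost_def total_cost_def run_greedy_sched by (rule integral_suminf[OF dominated])
qed

lemma h_le_expected_cost_greedy_sched: "h lin v \<le> expected_cost K \<mu> (greedy_sched K h) lin v"
proof -
  have "(\<integral>\<omega>. Y n (lin, v) \<omega> \<partial>omega \<mu>) =
      (\<integral>\<omega>. h_conf (X \<omega> n) \<partial>omega \<mu>) + (\<Sum>m<n. \<integral>\<omega>. cost K (X \<omega> m) \<partial>omega \<mu>)" for n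
    unfolding Y_def using integrable_h_run integrable_cost_run by simp
  then have "(\<lambda>n. \<integral>\<omega>. Y n (lin, v) \<omega> \<partial>omega \<mu>) \<longlonglongrightarrow> 0 + (\<Sum>m. \<integral>\<omega>. cost K (X \<omega> m) \<partial>omega \<mu>)"
    using tendsto_add[OF integral_h_run_tendsto_0 summable_LIMSEQ[OF expected_cost_greedy_sched(1)]]
    by simp
  moreover have "h lin v \<le> (\<integral>\<omega>. Y n (lin, v) \<omega> \<partial>omega \<mu>)" for n
    using h_conf_le_integral_Y[OF reachable_initial] by (simp add: h_conf_def)
  ultimately show ?thesis
    unfolding expected_cost_greedy_sched(2) by (intro LIMSEQ_le_const) auto
qed

end

theorem theorem6p6:
  fixes K :: "'l::finite \<Rightarrow> ('l, 'v::finite, 'r::finite) lkind"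
    and \<mu> :: "'r \<Rightarrow> real measure"
    and lin lout :: 'l
    and I :: "'l \<Rightarrow> ('v \<Rightarrow> real) set"
    and h :: "'l \<Rightarrow> ('v \<Rightarrow> real) \<Rightarrow> real"
    and d :: nat
    and v :: "'v \<Rightarrow> real"
  assumes "valid_cfg K lout \<mu>"
    and "linear_invariant K \<mu> lin I"
    and "plcs K \<mu> I lout d h"
    and "concentration K \<mu> lin lout I"
    and "bounded_update K \<mu> I"
    and "v \<in> I lin"
  shows "supval K \<mu> lin v \<ge> ereal (h lin v)"
proof -
  obtain M where "M > 0" and "\<forall>l l' F. K l = Assign l' F \<longrightarrow>
      (\<forall>v\<in>I l. \<forall>u\<in>sampled \<mu>. \<forall>x. \<bar>F v u x - v x\<bar> \<le> M)"
    using assms(5) unfolding bounded_update_def by blast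
  moreover obtain C D where "C \<ge> 0" and "\<forall>l B w. 1 \<le> B \<longrightarrow> (\<forall>z. \<bar>w z\<bar> \<le> B) \<longrightarrow>
      \<bar>h l w\<bar> \<le> C * B ^ D \<and> \<bar>cost K (l, w)\<bar> \<le> C * B ^ D"
    using plcs_cost_growth[OF assms(1,3)] by blast
  ultimately interpret plcs_bounds K \<mu> lin lout I h d v M C D
    using assms by unfold_locales blast+
  have "ereal (h lin v) \<le> ereal (expected_cost K \<mu> (greedy_sched K h) lin v)"
    using h_le_expected_cost_greedy_sched by simp
  also have "\<dots> \<le> supval K \<mu> lin v"
    unfolding supval_def using admissible_greedy_sched by (intro SUP_upper) simp
  finally show ?thesis .
qed

end
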